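(* For every composition $I$ of $n\ge1$, the number of (type A) permutation tableaux of the shape encoded by $I$ is \[ \mathrm{PT}^A_I=\sum_{J\succeq I}(-1)^{\ell(I)-\ell(J)}\,\mathrm{Fact}(J), \] where the sum is over compositions $J$ of $n$ coarser than or equal to $I$ and $\mathrm{Fact}(j_1,\dots,j_p)=p^{j_1}(p-1)^{j_2}\cdots2^{j_{p-1}}1^{j_p}$.
   Context: A composition of $n$ is a sequence $I=(i_1,\dots,i_r)$ of positive integers with sum $n$; $\ell(I)=r$; $\mathrm{Des}(I)=\{i_1,i_1+i_2,\dots,i_1+\dots+i_{r-1}\}$; $J\succeq I$ ($J$ coarser than $I$) means $\mathrm{Des}(J)\subseteq\mathrm{Des}(I)$. Let $k\ge1$ and let $\lambda$ be a Young diagram with exactly $k$ rows (rows of length $0$ allowed) and exactly $n-k$ nonempty columns, drawn in French convention (rows left-justified, longest row at the bottom). Encode $\lambda$ by the composition $I=(i_1,\dots,i_k)$ of $n$ where, for $1\le t\le k$, $i_t-1$ is the number of columns of length $k-t+1$ (a bijection onto compositions of $n$ with $k$ parts). A (type A) permutation tableau of shape $\lambda$ is a filling of the boxes of $\lambda$ with $0$'s and $1$'s such that (1) every column contains at least one $1$, and (2) no box containing a $0$ has both a $1$ below it in the same column and a $1$ to its left in the same row. *)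

theory Defs
  imports Main
begin

definition is_composition :: "nat \<Rightarrow> nat list \<Rightarrow> bool" where
  "is_composition n I \<longleftrightarrow> (\<forall>x\<in>set I. 0 < x) \<and> sum_list I = n"

definition Des :: "nat list \<Rightarrow> nat set" where
  "Des I = {sum_list (take t I) | t. 1 \<le> t \<and> t < length I}"

definition coarser :: "nat list \<Rightarrow> nat list \<Rightarrow> bool" where
  "coarser J I \<longleftrightarrow> Des J \<subseteq> Des I"

definition Fact :: "nat list \<Rightarrow> nat" where
  "Fact J = (\<Prod>t<length J. (length J - t) ^ (J ! t))"

(* Column lengths of the Young diagram encoded by I = (i_1,...,i_k), columns listed
   from left to right (0-indexed): i_t - 1 columns of length k - t + 1, for t = 1..k. *)
definition col_lengths :: "nat list \<Rightarrow> nat list" where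
  "col_lengths I = concat (map (\<lambda>t. replicate (I ! t - 1) (length I - t)) [0..<length I])"

(* Boxes (r, c): column c (0-indexed from the left), row r (0-indexed from the bottom,
   French convention). *)
definition boxes :: "nat list \<Rightarrow> (nat \<times> nat) set" where
  "boxes I = {(r, c). c < length (col_lengths I) \<and> r < col_lengths I ! c}"

(* A filling is given by the set T of boxes containing 1 (all other boxes contain 0). *)
definition is_perm_tableau :: "nat list \<Rightarrow> (nat \<times> nat) set \<Rightarrow> bool" where
  "is_perm_tableau I T \<longleftrightarrow>
     T \<subseteq> boxes I \<and>
     (\<forall>c < length (col_lengths I). \<exists>r. (r, c) \<in> T) \<and>
     (\<forall>(r, c) \<in> boxes I - T. \<not> ((\<exists>r' < r. (r', c) \<in> T) \<and> (\<exists>c' < c. (r, c') \<in> T)))"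

definition PT_A :: "nat list \<Rightarrow> nat" where
  "PT_A I = card {T. is_perm_tableau I T}"

end

theory Submission
  imports Defs Complex_Main
begin

text \<open>Deleting the leftmost column of a permutation tableau leaves a permutation tableau, and the
  deleted column may be any nonempty set of free rows, i.e. rows with no 0 that has a 1
  below it; afterwards the free rows are the chosen rows together with the free rows below all of
  them. Hence \<open>F(x) = \<Sum>\<^sub>T x ^ #(free rows of T)\<close> becomes \<open>x (F(x + 1) - F(x))\<close> when a
  column is added and \<open>x F(x)\<close> when an empty row is added. The polynomials
  \<open>x(x + 1)\<cdots>(x + q - 1) / q!\<close> are eigenvectors of the first operator, with eigenvalue \<open>q\<close>, and
  in this basis the two recurrences become the recursion of the coarsenings of a composition
  along its first part, so \<open>F\<close> is the alternating sum over coarsenings \<open>J\<close> of \<open>Fact J\<close> times the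
  basis polynomial of degree \<open>\<ell>(J)\<close>. At \<open>x = 1\<close> every basis polynomial is 1.\<close>

section \<open>Multiset coefficients and the operator \<open>x \<Delta>\<close>\<close>

definition multichoose :: "real \<Rightarrow> nat \<Rightarrow> real" where
  "multichoose x q = pochhammer x q / fact q"

definition xdelta :: "(real \<Rightarrow> real) \<Rightarrow> real \<Rightarrow> real" where
  "xdelta f x = x * (f (x + 1) - f x)"

lemma multichoose_one [simp]: "multichoose 1 q = 1"
  unfolding multichoose_def pochhammer_fact[symmetric] by simp

lemma xdelta_multichoose: "xdelta (\<lambda>y. multichoose y q) x = real q * multichoose x q"
proof -
  have "x * pochhammer (x + 1) q = (x + real q) * pochhammer x q"
    using pochhammer_rec[of x q] pochhammer_rec'[of x q] by simp
  then show ?thesis unfolding xdelta_def multichoose_def by (simp add: field_simps)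
qed

lemma mult_multichoose_shift: "x * multichoose (x + 1) q = real (Suc q) * multichoose x (Suc q)"
proof -
  have "x * pochhammer (x + 1) q = pochhammer x (Suc q)"
    using pochhammer_rec[of x q] by simp
  then show ?thesis unfolding multichoose_def by (simp add: divide_simps)
qed

lemma xdelta_sum:
  "xdelta (\<lambda>y. \<Sum>i\<in>A. c i * f i y) x = (\<Sum>i\<in>A. c i * xdelta (f i) x)"
  unfolding xdelta_def sum_distrib_left sum_subtractf[symmetric]
  by (intro sum.cong refl) (simp add: algebra_simps)

definition step_poly :: "nat \<Rightarrow> nat \<Rightarrow> real \<Rightarrow> real" where
  "step_poly a p x = real (Suc p) ^ a * multichoose x (Suc p) - real p ^ a * multichoose x p"

lemma mult_multichoose_eq_step_poly: "x * multichoose x p = step_poly 1 p x"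
  using mult_multichoose_shift[of x p] xdelta_multichoose[of p x]
  unfolding step_poly_def xdelta_def by (simp add: algebra_simps)

lemma xdelta_step_poly: "xdelta (step_poly a p) x = step_poly (Suc a) p x"
proof -
  have "xdelta (step_poly a p) x = real (Suc p) ^ a * xdelta (\<lambda>y. multichoose y (Suc p)) x
      - real p ^ a * xdelta (\<lambda>y. multichoose y p) x"
    unfolding xdelta_def step_poly_def by (simp add: algebra_simps)
  then show ?thesis
    unfolding xdelta_multichoose step_poly_def by simp
qed

section \<open>Permutation tableaux built column by column\<close>

lemma sum_Pow_power_card:
  fixes x :: "'b::comm_semiring_1"
  assumes "finite V"
  shows "(\<Sum>S\<in>Pow V. x ^ card S) = (1 + x) ^ card V"
  using prod_add[OF assms, of "\<lambda>_. x" "\<lambda>_. 1"] by (simp add: add.commute)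

text \<open>The summand weighs the free rows after a column with 1s in the rows \<open>S \<subseteq> U\<close> is added
  to a tableau whose free rows are \<open>U\<close>.\<close>

lemma sum_nonempty_subsets_power:
  fixes U :: "'a::linorder set" and x :: real
  assumes "finite U"
  shows "(\<Sum>S | S \<subseteq> U \<and> S \<noteq> {}. x ^ card (S \<union> {r\<in>U. \<forall>s\<in>S. r < s}))
    = x * ((1 + x) ^ card U - x ^ card U)"
  using assms
proof (induction U rule: finite_linorder_min_induct)
  case empty
  then show ?case by simp
next
  case (insert m U)
  let ?f = "\<lambda>S. x ^ card (S \<union> {r\<in>insert m U. \<forall>s\<in>S. r < s})"
  have m: "m \<notin> U" using insert.hyps by blast
  have split: "{S. S \<subseteq> insert m U \<and> S \<noteq> {}} = insert m ` Pow U \<union> {S. S \<subseteq> U \<and> S \<noteq> {}}"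
  proof (intro set_eqI iffI)
    fix S assume "S \<in> {S. S \<subseteq> insert m U \<and> S \<noteq> {}}"
    then show "S \<in> insert m ` Pow U \<union> {S. S \<subseteq> U \<and> S \<noteq> {}}"
      by (cases "m \<in> S") (auto simp: image_iff intro!: bexI[of _ "S - {m}"])
  qed auto
  have "(\<Sum>S\<in>insert m ` Pow U. ?f S) = (\<Sum>S\<in>Pow U. x * x ^ card S)"
  proof (subst sum.reindex)
    show "inj_on (insert m) (Pow U)" using m by (auto intro!: inj_onI simp: insert_ident)
    show "sum (?f \<circ> insert m) (Pow U) = (\<Sum>S\<in>Pow U. x * x ^ card S)"
    proof (intro sum.cong refl)
      fix S assume "S \<in> Pow U"
      then have "insert m S \<union> {r\<in>insert m U. \<forall>s\<in>insert m S. r < s} = insert m S"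
        "m \<notin> S" "finite S" using insert.hyps m finite_subset by auto
      then show "(?f \<circ> insert m) S = x * x ^ card S" by simp
    qed
  qed
  also have "\<dots> = x * (1 + x) ^ card U"
    by (simp add: sum_Pow_power_card[OF insert.hyps(1)] flip: sum_distrib_left)
  finally have with_m: "(\<Sum>S\<in>insert m ` Pow U. ?f S) = x * (1 + x) ^ card U" .
  have "(\<Sum>S | S \<subseteq> U \<and> S \<noteq> {}. ?f S)
      = (\<Sum>S | S \<subseteq> U \<and> S \<noteq> {}. x * x ^ card (S \<union> {r\<in>U. \<forall>s\<in>S. r < s}))"
  proof (intro sum.cong refl)
    fix S assume S: "S \<in> {S. S \<subseteq> U \<and> S \<noteq> {}}"
    then have "S \<union> {r\<in>insert m U. \<forall>s\<in>S. r < s} = insert m (S \<union> {r\<in>U. \<forall>s\<in>S. r < s})"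
      using insert.hyps by auto
    moreover have "m \<notin> S \<union> {r\<in>U. \<forall>s\<in>S. r < s}" "finite (S \<union> {r\<in>U. \<forall>s\<in>S. r < s})"
      using S m insert.hyps(1) finite_subset by auto
    ultimately show "?f S = x * x ^ card (S \<union> {r\<in>U. \<forall>s\<in>S. r < s})" by simp
  qed
  also have "\<dots> = x * (x * ((1 + x) ^ card U - x ^ card U))"
    using insert.IH by (simp add: sum_distrib_left[symmetric])
  finally have without_m: "(\<Sum>S | S \<subseteq> U \<and> S \<noteq> {}. ?f S) = x * (x * ((1 + x) ^ card U - x ^ card U))" .
  have "(\<Sum>S | S \<subseteq> insert m U \<and> S \<noteq> {}. ?f S)
      = (\<Sum>S\<in>insert m ` Pow U. ?f S) + (\<Sum>S | S \<subseteq> U \<and> S \<noteq> {}. ?f S)"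
    unfolding split using insert.hyps(1) m by (intro sum.union_disjoint) auto
  also have "\<dots> = x * ((1 + x) ^ card (insert m U) - x ^ card (insert m U))"
    unfolding with_m without_m using insert.hyps(1) m by (simp add: algebra_simps)
  finally show ?case .
qed

text \<open>Diagrams are given by their list of column lengths, leftmost column first; a filling
  is the set of cells holding a 1, a cell \<open>(r, c)\<close> lying in row \<open>r\<close> (from the bottom)
  and column \<open>c\<close>.\<close>

definition cells :: "nat list \<Rightarrow> (nat \<times> nat) set" where
  "cells L = {(r, c). c < length L \<and> r < L ! c}"

definition zero_rule :: "nat list \<Rightarrow> (nat \<times> nat) set \<Rightarrow> bool" where
  "zero_rule L T \<longleftrightarrow> (\<forall>r c. (r, c) \<in> cells L \<longrightarrow> (r, c) \<notin> T \<longrightarrow>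
     (\<exists>r'<r. (r', c) \<in> T) \<longrightarrow> \<not> (\<exists>c'<c. (r, c') \<in> T))"

definition ptableau :: "nat list \<Rightarrow> (nat \<times> nat) set \<Rightarrow> bool" where
  "ptableau L T \<longleftrightarrow> T \<subseteq> cells L \<and> (\<forall>c < length L. \<exists>r. (r, c) \<in> T) \<and> zero_rule L T"

text \<open>A 1 may be put in row \<open>r\<close> of a new leftmost column exactly when row \<open>r\<close> is free.\<close>

definition free_row :: "nat list \<Rightarrow> (nat \<times> nat) set \<Rightarrow> nat \<Rightarrow> bool" where
  "free_row L T r \<longleftrightarrow> (\<forall>c. (r, c) \<in> cells L \<longrightarrow> (r, c) \<notin> T \<longrightarrow> \<not> (\<exists>r'<r. (r', c) \<in> T))"

definition free_rows :: "nat \<Rightarrow> nat list \<Rightarrow> (nat \<times> nat) set \<Rightarrow> nat set" where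
  "free_rows k L T = {r. r < k \<and> free_row L T r}"

definition add_column :: "nat set \<Rightarrow> (nat \<times> nat) set \<Rightarrow> (nat \<times> nat) set" where
  "add_column S T = (\<lambda>r. (r, 0)) ` S \<union> (\<lambda>(r, c). (r, Suc c)) ` T"

lemma add_column_0 [simp]: "(r, 0) \<in> add_column S T \<longleftrightarrow> r \<in> S"
  unfolding add_column_def by auto

lemma add_column_Suc [simp]: "(r, Suc c) \<in> add_column S T \<longleftrightarrow> (r, c) \<in> T"
  unfolding add_column_def by auto

lemma cells_Cons_0 [simp]: "(r, 0) \<in> cells (k # L) \<longleftrightarrow> r < k"
  unfolding cells_def by auto

lemma cells_Cons_Suc [simp]: "(r, Suc c) \<in> cells (k # L) \<longleftrightarrow> (r, c) \<in> cells L"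
  unfolding cells_def by auto

lemma add_column_first_rest: "add_column {r. (r, 0) \<in> T} {(r, c). (r, Suc c) \<in> T} = T"
proof (rule set_eqI)
  fix p :: "nat \<times> nat"
  show "p \<in> add_column {r. (r, 0) \<in> T} {(r, c). (r, Suc c) \<in> T} \<longleftrightarrow> p \<in> T"
    by (cases p; cases "snd p") auto
qed

lemma add_column_inject: "add_column S T = add_column S' T' \<longleftrightarrow> S = S' \<and> T = T'"
proof
  assume eq: "add_column S T = add_column S' T'"
  have "S = S'" using eq add_column_0 by blast
  moreover have "p \<in> T \<longleftrightarrow> p \<in> T'" for p
    using eq add_column_Suc by (cases p) metis
  ultimately show "S = S' \<and> T = T'" by auto
qed simp

lemma add_column_subset_cells:
  "add_column S T \<subseteq> cells (k # L) \<longleftrightarrow> S \<subseteq> {..<k} \<and> T \<subseteq> cells L"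
proof
  assume sub: "add_column S T \<subseteq> cells (k # L)"
  have "r < k" if "r \<in> S" for r
    using sub add_column_0[of r S T] that by (auto simp del: add_column_0)
  moreover have "(r, c) \<in> cells L" if "(r, c) \<in> T" for r c
    using sub add_column_Suc[of r c S T] that by (auto simp del: add_column_Suc)
  ultimately show "S \<subseteq> {..<k} \<and> T \<subseteq> cells L" by auto
next
  assume "S \<subseteq> {..<k} \<and> T \<subseteq> cells L"
  then show "add_column S T \<subseteq> cells (k # L)"
    unfolding add_column_def by auto
qed

lemma add_column_columns:
  "(\<forall>c < length (k # L). \<exists>r. (r, c) \<in> add_column S T) \<longleftrightarrow>
     S \<noteq> {} \<and> (\<forall>c < length L. \<exists>r. (r, c) \<in> T)"
  by (simp add: All_less_Suc2) blast

lemma zero_rule_add_column: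
  "zero_rule (k # L) (add_column S T) \<longleftrightarrow> zero_rule L T \<and> (\<forall>r\<in>S. free_row L T r)"
proof
  assume rule: "zero_rule (k # L) (add_column S T)"
  have no_one_left: "\<not> (\<exists>c'<Suc c. (r, c') \<in> add_column S T)"
    if "(r, c) \<in> cells L" "(r, c) \<notin> T" "\<exists>r'<r. (r', c) \<in> T" for r c
    using rule that unfolding zero_rule_def by (metis add_column_Suc cells_Cons_Suc)
  from no_one_left show "zero_rule L T \<and> (\<forall>r\<in>S. free_row L T r)"
    unfolding zero_rule_def free_row_def by (metis Suc_mono add_column_0 add_column_Suc zero_less_Suc)
next
  assume rule: "zero_rule L T \<and> (\<forall>r\<in>S. free_row L T r)"
  show "zero_rule (k # L) (add_column S T)"
    unfolding zero_rule_def
  proof (intro allI impI notI)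
    fix r c
    assume cell: "(r, c) \<in> cells (k # L)" "(r, c) \<notin> add_column S T"
      and below: "\<exists>r'<r. (r', c) \<in> add_column S T" and left: "\<exists>c'<c. (r, c') \<in> add_column S T"
    obtain c0 where c: "c = Suc c0" using left by (cases c) auto
    obtain c' where c': "c' < c" "(r, c') \<in> add_column S T" using left by blast
    have old: "(r, c0) \<in> cells L" "(r, c0) \<notin> T" "\<exists>r'<r. (r', c0) \<in> T"
      using cell below c by auto
    show False
    proof (cases c')
      case 0
      then show False using rule old c' unfolding free_row_def by auto
    next
      case (Suc c'')
      then show False using rule old c' c unfolding zero_rule_def by auto
    qed
  qed
qed

lemma ptableau_add_column:
  "ptableau (k # L) (add_column S T) \<longleftrightarrow> ptableau L T \<and> S \<noteq> {} \<and> S \<subseteq> free_rows k L T"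
  unfolding ptableau_def free_rows_def add_column_subset_cells add_column_columns zero_rule_add_column
  by blast

lemma all_nat_0_Suc_iff: "(\<forall>n. P n) \<longleftrightarrow> P 0 \<and> (\<forall>n. P (Suc n))"
  by (metis not0_implies_Suc)

lemma free_row_add_column:
  assumes "r < k"
  shows "free_row (k # L) (add_column S T) r \<longleftrightarrow> (r \<in> S \<or> (\<forall>s\<in>S. r < s)) \<and> free_row L T r"
proof -
  have "free_row (k # L) (add_column S T) r \<longleftrightarrow> (r \<notin> S \<longrightarrow> \<not> (\<exists>s<r. s \<in> S)) \<and> free_row L T r"
    unfolding free_row_def all_nat_0_Suc_iff[where P = "\<lambda>c. (r, c) \<in> cells (k # L) \<longrightarrow> _ c"]
    using assms by simp
  then show ?thesis by (auto simp: not_less_iff_gr_or_eq)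
qed

lemma free_rows_add_column:
  "S \<subseteq> free_rows k L T \<Longrightarrow>
    free_rows k (k # L) (add_column S T) = S \<union> {r\<in>free_rows k L T. \<forall>s\<in>S. r < s}"
  unfolding free_rows_def using free_row_add_column[of _ k L S T] by auto

lemma finite_cells: "finite (cells L)"
proof (rule finite_subset)
  show "cells L \<subseteq> {..<sum_list L} \<times> {..<length L}"
    unfolding cells_def using elem_le_sum_list[of _ L] by fastforce
qed simp

lemma finite_ptableaux: "finite {T. ptableau L T}"
proof (rule finite_subset)
  show "{T. ptableau L T} \<subseteq> Pow (cells L)" unfolding ptableau_def by auto
qed (simp add: finite_cells)

lemma finite_free_rows: "finite (free_rows k L T)"
  unfolding free_rows_def by simp

definition free_gf :: "nat \<Rightarrow> nat list \<Rightarrow> real \<Rightarrow> real" where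
  "free_gf k L x = (\<Sum>T | ptableau L T. x ^ card (free_rows k L T))"

lemma free_gf_Cons: "free_gf k (k # L) x = xdelta (free_gf k L) x"
proof -
  define D where "D = (SIGMA T:{T. ptableau L T}. {S. S \<subseteq> free_rows k L T \<and> S \<noteq> {}})"
  have tableaux: "{T'. ptableau (k # L) T'} = (\<lambda>(T, S). add_column S T) ` D"
  proof (intro set_eqI iffI)
    fix T' assume "T' \<in> {T'. ptableau (k # L) T'}"
    then have "ptableau (k # L) (add_column {r. (r, 0) \<in> T'} {(r, c). (r, Suc c) \<in> T'})"
      by (simp add: add_column_first_rest)
    then have "({(r, c). (r, Suc c) \<in> T'}, {r. (r, 0) \<in> T'}) \<in> D"
      unfolding D_def ptableau_add_column by blast
    then show "T' \<in> (\<lambda>(T, S). add_column S T) ` D"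
      using add_column_first_rest[of T'] by force
  qed (auto simp: D_def ptableau_add_column)
  have inj: "inj_on (\<lambda>(T, S). add_column S T) D"
    by (auto intro!: inj_onI simp: add_column_inject)
  have "free_gf k (k # L) x = (\<Sum>(T, S)\<in>D. x ^ card (free_rows k (k # L) (add_column S T)))"
    unfolding free_gf_def tableaux sum.reindex[OF inj] by (simp add: case_prod_unfold)
  also have "\<dots> = (\<Sum>(T, S)\<in>D. x ^ card (S \<union> {r\<in>free_rows k L T. \<forall>s\<in>S. r < s}))"
    by (intro sum.cong refl) (auto simp: D_def free_rows_add_column)
  also have "\<dots> = (\<Sum>T | ptableau L T. \<Sum>S | S \<subseteq> free_rows k L T \<and> S \<noteq> {}.
      x ^ card (S \<union> {r\<in>free_rows k L T. \<forall>s\<in>S. r < s}))"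
    unfolding D_def using finite_ptableaux finite_free_rows by (subst sum.Sigma) auto
  also have "\<dots> = (\<Sum>T | ptableau L T. x * ((1 + x) ^ card (free_rows k L T) - x ^ card (free_rows k L T)))"
    by (intro sum.cong refl sum_nonempty_subsets_power finite_free_rows)
  also have "\<dots> = xdelta (free_gf k L) x"
    unfolding xdelta_def free_gf_def sum_subtractf[symmetric] sum_distrib_left by (simp add: add.commute)
  finally show ?thesis .
qed

section \<open>The shape of a composition\<close>

lemma col_lengths_Nil [simp]: "col_lengths [] = []"
  unfolding col_lengths_def by simp

lemma col_lengths_Cons: "col_lengths (i # I) = replicate (i - 1) (Suc (length I)) @ col_lengths I"
proof -
  have "[0..<length (i # I)] = 0 # map Suc [0..<length I]"
    by (simp add: upt_conv_Cons map_Suc_upt del: upt_Suc)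
  then show ?thesis unfolding col_lengths_def by (simp add: comp_def)
qed

lemma col_lengths_le: "l \<in> set (col_lengths I) \<Longrightarrow> l \<le> length I"
  unfolding col_lengths_def by auto

lemma is_perm_tableau_iff: "is_perm_tableau I T \<longleftrightarrow> ptableau (col_lengths I) T"
  unfolding is_perm_tableau_def ptableau_def zero_rule_def boxes_def cells_def by blast

definition shape_gf :: "nat list \<Rightarrow> real \<Rightarrow> real" where
  "shape_gf I = free_gf (length I) (col_lengths I)"

lemma PT_A_eq_shape_gf: "real (PT_A I) = shape_gf I 1"
  unfolding PT_A_def shape_gf_def free_gf_def is_perm_tableau_iff by simp

lemma shape_gf_Nil: "shape_gf [] x = 1"
proof -
  have "{T. ptableau [] T} = {{}}" unfolding ptableau_def cells_def zero_rule_def by auto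
  then show ?thesis unfolding shape_gf_def free_gf_def free_rows_def by simp
qed

text \<open>A part equal to 1 adds a row and no column; the new top row is free.\<close>

lemma shape_gf_Cons_1: "shape_gf (1 # I) x = x * shape_gf I x"
proof -
  let ?L = "col_lengths I" and ?k = "length I"
  have "free_row ?L T ?k" for T
    unfolding free_row_def cells_def using col_lengths_le[of _ I] nth_mem by fastforce
  then have "free_rows (Suc ?k) ?L T = insert ?k (free_rows ?k ?L T)" for T
    unfolding free_rows_def by auto
  then have "shape_gf (1 # I) x = (\<Sum>T | ptableau ?L T. x * x ^ card (free_rows ?k ?L T))"
    unfolding shape_gf_def free_gf_def col_lengths_Cons[of 1 I] using finite_free_rows
    by (intro sum.cong) (auto simp: free_rows_def)
  then show ?thesis unfolding shape_gf_def free_gf_def by (simp add: sum_distrib_left)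
qed

lemma shape_gf_Cons_Suc: "0 < a \<Longrightarrow> shape_gf (Suc a # I) x = xdelta (shape_gf (a # I)) x"
  unfolding shape_gf_def
  by (cases a) (simp_all add: col_lengths_Cons free_gf_Cons[of "Suc (length I)", symmetric])

section \<open>Coarsenings\<close>

lemma Des_Nil [simp]: "Des [] = {}"
  unfolding Des_def by simp

lemma Des_singleton [simp]: "Des [a] = {}"
  unfolding Des_def by simp

lemma Des_Cons: "K \<noteq> [] \<Longrightarrow> Des (a # K) = insert a ((+) a ` Des K)"
proof (intro set_eqI iffI)
  fix y assume "y \<in> Des (a # K)"
  then obtain t where t: "1 \<le> t" "t < Suc (length K)" "y = sum_list (take t (a # K))"
    unfolding Des_def by auto
  then obtain t' where "t = Suc t'" by (cases t) auto
  with t show "y \<in> insert a ((+) a ` Des K)"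
    unfolding Des_def by (cases t') (auto intro!: image_eqI)
next
  fix y assume K: "K \<noteq> []" and "y \<in> insert a ((+) a ` Des K)"
  then consider "y = a" | t where "1 \<le> t" "t < length K" "y = a + sum_list (take t K)"
    unfolding Des_def by auto
  then show "y \<in> Des (a # K)"
  proof cases
    case 1
    then show ?thesis using K unfolding Des_def by (auto intro!: exI[of _ 1] simp: neq_Nil_conv)
  next
    case 2
    then show ?thesis unfolding Des_def by (auto intro!: exI[of _ "Suc t"])
  qed
qed

lemma Des_Cons_subset: "Des (a # I) \<subseteq> insert a ((+) a ` Des I)"
  by (cases "I = []") (simp_all add: Des_Cons)

lemma Des_merge: "K \<noteq> [] \<Longrightarrow> Des ((a + hd K) # tl K) = (+) a ` Des K"
  by (cases K; cases "tl K = []") (auto simp: Des_Cons image_image add.assoc)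

lemma zero_notin_Des:
  assumes "\<forall>y\<in>set K. 0 < y"
  shows "0 \<notin> Des K"
proof
  assume "0 \<in> Des K"
  then obtain t where t: "1 \<le> t" "t < length K" "sum_list (take t K) = 0"
    unfolding Des_def by auto
  then have "K ! 0 \<in> set (take t K)" by (auto simp: in_set_conv_nth intro!: exI[of _ 0])
  with assms t(3) show False by (metis in_set_takeD less_numeral_extra(3) sum_list_eq_0_iff)
qed

lemma image_add_subset_insert_iff:
  fixes a :: nat
  assumes "0 \<notin> A"
  shows "(+) a ` A \<subseteq> insert a ((+) a ` B) \<longleftrightarrow> A \<subseteq> B"
  using assms by auto

lemma positive_sum_list_eq_0_iff: "\<forall>y\<in>set J. 0 < y \<Longrightarrow> sum_list J = (0::nat) \<longleftrightarrow> J = []"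
  by (cases J) (auto simp: sum_list_eq_0_iff)

definition coarsenings :: "nat list \<Rightarrow> nat list set" where
  "coarsenings I = {J. is_composition (sum_list I) J \<and> coarser J I}"

lemma coarsenings_Nil: "coarsenings [] = {[]}"
  unfolding coarsenings_def is_composition_def coarser_def
  using positive_sum_list_eq_0_iff by (auto simp: Des_def)

lemma Cons_in_coarsenings:
  assumes "0 < a" and J: "J \<in> coarsenings I"
  shows "a # J \<in> coarsenings (a # I)"
proof -
  have pos: "\<forall>y\<in>set J. 0 < y" and sum: "sum_list J = sum_list I" and Des: "Des J \<subseteq> Des I"
    using J unfolding coarsenings_def is_composition_def coarser_def by auto
  have "Des (a # J) \<subseteq> Des (a # I)"
  proof (cases "J = []")
    case False
    then have "I \<noteq> []" using pos sum positive_sum_list_eq_0_iff by fastforce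
    with False Des show ?thesis by (auto simp: Des_Cons)
  qed simp
  with assms pos sum show ?thesis unfolding coarsenings_def is_composition_def coarser_def by simp
qed

lemma merge_in_coarsenings:
  assumes K: "K \<in> coarsenings I" "K \<noteq> []"
  shows "(a + hd K) # tl K \<in> coarsenings (a # I)"
proof -
  have pos: "\<forall>y\<in>set K. 0 < y" and sum: "sum_list K = sum_list I" and Des: "Des K \<subseteq> Des I"
    using K unfolding coarsenings_def is_composition_def coarser_def by auto
  have "I \<noteq> []" using K pos sum positive_sum_list_eq_0_iff by fastforce
  then have "Des ((a + hd K) # tl K) \<subseteq> Des (a # I)"
    using Des by (auto simp: Des_merge[OF K(2)] Des_Cons)
  moreover have "\<forall>y\<in>set ((a + hd K) # tl K). 0 < y" "sum_list ((a + hd K) # tl K) = a + sum_list I"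
    using K(2) pos sum by (auto simp: neq_Nil_conv)
  ultimately show ?thesis unfolding coarsenings_def is_composition_def coarser_def by simp
qed

lemma coarsenings_Cons_cases:
  assumes "0 < a" and J: "J \<in> coarsenings (a # I)"
  obtains J' where "J' \<in> coarsenings I" "J = a # J'"
    | K where "K \<in> coarsenings I" "K \<noteq> []" "J = (a + hd K) # tl K"
proof -
  have pos: "\<forall>y\<in>set J. 0 < y" and sum: "sum_list J = a + sum_list I"
    and Des: "Des J \<subseteq> insert a ((+) a ` Des I)"
    using J Des_Cons_subset[of a I] unfolding coarsenings_def is_composition_def coarser_def by auto
  obtain j J' where jJ: "J = j # J'" using sum assms(1) by (cases J) auto
  have "a \<le> j"
  proof (cases "J' = []")
    case False
    then show ?thesis using Des jJ by (auto simp: Des_Cons)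
  qed (use sum jJ in simp)
  then consider "j = a" | "a < j" by linarith
  then show thesis
  proof cases
    case 1
    have "Des J' \<subseteq> Des I"
    proof (cases "J' = []")
      case False
      then have "(+) a ` Des J' \<subseteq> insert a ((+) a ` Des I)" using Des jJ 1 by (simp add: Des_Cons)
      then show ?thesis using zero_notin_Des pos jJ image_add_subset_insert_iff by simp
    qed simp
    then have "J' \<in> coarsenings I"
      using pos sum jJ 1 unfolding coarsenings_def is_composition_def coarser_def by simp
    then show thesis using that(1) jJ 1 by blast
  next
    case 2
    define K where "K = (j - a) # J'"
    have posK: "\<forall>y\<in>set K. 0 < y" using pos jJ 2 by (simp add: K_def)
    have J_eq: "J = (a + hd K) # tl K" using jJ 2 by (simp add: K_def)
    have "Des K \<subseteq> Des I"
    proof (cases "J' = []")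
      case False
      then have "(+) a ` Des K \<subseteq> insert a ((+) a ` Des I)"
        using Des Des_merge[of K a] J_eq by (simp add: K_def)
      then show ?thesis using zero_notin_Des[OF posK] image_add_subset_insert_iff by blast
    qed (simp add: K_def)
    then have "K \<in> coarsenings I"
      using posK sum jJ 2 unfolding coarsenings_def is_composition_def coarser_def by (simp add: K_def)
    then show thesis using that(2) J_eq by (simp add: K_def)
  qed
qed

lemma coarsenings_Cons:
  assumes "0 < a"
  shows "coarsenings (a # I) = (#) a ` coarsenings I \<union> (\<lambda>K. (a + hd K) # tl K) ` (coarsenings I - {[]})"
proof (intro equalityI subsetI)
  fix J assume "J \<in> coarsenings (a # I)"
  then show "J \<in> (#) a ` coarsenings I \<union> (\<lambda>K. (a + hd K) # tl K) ` (coarsenings I - {[]})"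
    by (cases rule: coarsenings_Cons_cases[OF assms]) auto
qed (auto intro: Cons_in_coarsenings[OF assms] merge_in_coarsenings)

lemma finite_coarsenings: "finite (coarsenings I)"
proof -
  have "coarsenings I \<subseteq> {J. set J \<subseteq> {0..sum_list I} \<and> length J \<le> sum_list I}"
  proof
    fix J assume "J \<in> coarsenings I"
    then have pos: "\<forall>y\<in>set J. 0 < y" and sum: "sum_list J = sum_list I"
      unfolding coarsenings_def is_composition_def by auto
    have "length J \<le> sum_list J"
      using pos by (induction J) auto
    with sum show "J \<in> {J. set J \<subseteq> {0..sum_list I} \<and> length J \<le> sum_list I}"
      using elem_le_sum_list[of _ J] by (auto simp: in_set_conv_nth)
  qed
  then show ?thesis by (rule finite_subset) (rule finite_lists_length_le, simp)
qed

lemma length_coarsening_le: "\<forall>y\<in>set I. 0 < y \<Longrightarrow> J \<in> coarsenings I \<Longrightarrow> length J \<le> length I"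
proof (induction I arbitrary: J)
  case Nil
  then show ?case by (simp add: coarsenings_Nil)
next
  case (Cons a I)
  then show ?case by (auto simp: coarsenings_Cons simp del: list.sel) (fastforce simp: length_tl)
qed

section \<open>The alternating sum\<close>

lemma Fact_Cons: "Fact (a # J) = Suc (length J) ^ a * Fact J"
  unfolding Fact_def length_Cons prod.lessThan_Suc_shift by simp

definition signed_Fact :: "nat list \<Rightarrow> nat list \<Rightarrow> real" where
  "signed_Fact I J = (-1) ^ (length I - length J) * real (Fact J)"

definition alt_sum :: "nat list \<Rightarrow> real \<Rightarrow> real" where
  "alt_sum I x = (\<Sum>J\<in>coarsenings I. signed_Fact I J * multichoose x (length J))"

lemma alt_sum_Cons:
  assumes a: "0 < a" and pos: "\<forall>y\<in>set I. 0 < y"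
  shows "alt_sum (a # I) x = (\<Sum>J\<in>coarsenings I. signed_Fact I J * step_poly a (length J) x)"
proof -
  let ?merge = "\<lambda>K. (a + hd K) # tl K"
  have "hd K \<noteq> 0" if "K \<in> coarsenings I" "K \<noteq> []" for K
    using that by (cases K) (auto simp: coarsenings_def is_composition_def)
  then have disj: "(#) a ` coarsenings I \<inter> ?merge ` (coarsenings I - {[]}) = {}"
    by fastforce
  have inj: "inj_on ?merge (coarsenings I - {[]})"
    unfolding inj_on_def by (metis DiffE add_left_cancel list.collapse list.inject singletonI)
  have "alt_sum (a # I) x = (\<Sum>J\<in>coarsenings I. signed_Fact (a # I) (a # J) * multichoose x (Suc (length J)))
     + (\<Sum>K\<in>coarsenings I - {[]}. signed_Fact (a # I) (?merge K) * multichoose x (length K))"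
    unfolding alt_sum_def coarsenings_Cons[OF a] using disj inj finite_coarsenings
    by (subst sum.union_disjoint) (auto simp: sum.reindex)
  also have "(\<Sum>J\<in>coarsenings I. signed_Fact (a # I) (a # J) * multichoose x (Suc (length J)))
      = (\<Sum>J\<in>coarsenings I. signed_Fact I J * (real (Suc (length J)) ^ a * multichoose x (Suc (length J))))"
    by (intro sum.cong refl) (simp add: signed_Fact_def Fact_Cons)
  also have "(\<Sum>K\<in>coarsenings I - {[]}. signed_Fact (a # I) (?merge K) * multichoose x (length K))
      = (\<Sum>K\<in>coarsenings I. - signed_Fact I K * (real (length K) ^ a * multichoose x (length K)))"
  proof (rule sum.mono_neutral_cong_left)
    fix K assume K: "K \<in> coarsenings I - {[]}"
    then have "length (a # I) - length K = Suc (length I - length K)"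
      using length_coarsening_le[OF pos] by (simp add: Suc_diff_le)
    with K show "signed_Fact (a # I) (?merge K) * multichoose x (length K)
        = - signed_Fact I K * (real (length K) ^ a * multichoose x (length K))"
      by (cases K) (auto simp: signed_Fact_def Fact_Cons power_add)
  qed (use a finite_coarsenings in auto)
  finally show ?thesis
    unfolding step_poly_def right_diff_distrib sum_subtractf by (simp add: sum_negf)
qed

lemma shape_gf_Cons:
  assumes a: "0 < a" and IH: "shape_gf I = alt_sum I"
  shows "shape_gf (a # I) = (\<lambda>x. \<Sum>J\<in>coarsenings I. signed_Fact I J * step_poly a (length J) x)"
proof -
  from a have "1 \<le> a" by simp
  then show ?thesis
  proof (induction a rule: nat_induct_at_least)
    case base
    show ?case
    proof
      fix x
      have "shape_gf (1 # I) x = (\<Sum>J\<in>coarsenings I. signed_Fact I J * (x * multichoose x (length J)))"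
        unfolding shape_gf_Cons_1 IH alt_sum_def sum_distrib_left by (simp add: mult.left_commute)
      then show "shape_gf (1 # I) x = (\<Sum>J\<in>coarsenings I. signed_Fact I J * step_poly 1 (length J) x)"
        by (simp add: mult_multichoose_eq_step_poly)
    qed
  next
    case (Suc a)
    show ?case
    proof
      fix x
      have "shape_gf (Suc a # I) x = xdelta (shape_gf (a # I)) x"
        using Suc.hyps by (simp add: shape_gf_Cons_Suc)
      then show "shape_gf (Suc a # I) x = (\<Sum>J\<in>coarsenings I. signed_Fact I J * step_poly (Suc a) (length J) x)"
        unfolding Suc.IH xdelta_sum xdelta_step_poly .
    qed
  qed
qed

lemma shape_gf_eq_alt_sum: "\<forall>y\<in>set I. 0 < y \<Longrightarrow> shape_gf I = alt_sum I"
proof (induction I)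
  case Nil
  show ?case
    by (simp add: fun_eq_iff shape_gf_Nil alt_sum_def coarsenings_Nil signed_Fact_def Fact_def multichoose_def)
next
  case (Cons a I)
  then show ?case by (simp add: fun_eq_iff shape_gf_Cons alt_sum_Cons)
qed

theorem mainTheorem2:
  fixes n :: nat and I :: "nat list"
  assumes "n \<ge> 1" and "is_composition n I"
  shows "int (PT_A I) =
    (\<Sum>J\<in>{J. is_composition n J \<and> coarser J I}.
        (-1) ^ (length I - length J) * int (Fact J))"
proof -
  have pos: "\<forall>y\<in>set I. 0 < y" and n: "{J. is_composition n J \<and> coarser J I} = coarsenings I"
    using assms(2) unfolding is_composition_def coarsenings_def by auto
  have "real_of_int (int (PT_A I)) = alt_sum I 1"
    using PT_A_eq_shape_gf shape_gf_eq_alt_sum[OF pos] by simp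
  also have "\<dots> = real_of_int (\<Sum>J\<in>coarsenings I. (-1) ^ (length I - length J) * int (Fact J))"
    unfolding alt_sum_def signed_Fact_def by simp
  finally show ?thesis unfolding n of_int_eq_iff .
qed

end
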